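(* Let $q$ be an odd prime power and let $f:\mathbb{F}_q\to\mathbb{F}_q$, $f(x)=x^2$, viewed as a function on the additive group of the finite field $\mathbb{F}_q$. Then $\mathrm{pres}(f)\le \lceil 2\sqrt{q-1}\rceil-1$.
   Context: For a function $g:\mathbb{F}_q\to\mathbb{F}_q$, $V(g)=\#\{g(x):x\in\mathbb{F}_q\}$. The permutation resemblance of $f$ is $\mathrm{pres}(f)=\min\{V(g): g:\mathbb{F}_q\to\mathbb{F}_q,\ x\mapsto g(x)+f(x) \text{ is a bijection of } \mathbb{F}_q\}$. *)

theory Defs
  imports "HOL-Analysis.Analysis"
begin

definition V :: "('a::finite \<Rightarrow> 'a) \<Rightarrow> nat" where
  "V g = card (range g)"

definition pres :: "('a::{finite, ab_group_add} \<Rightarrow> 'a) \<Rightarrow> nat" where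
  "pres f = (LEAST n. \<exists>g :: 'a \<Rightarrow> 'a. bij (\<lambda>x. g x + f x) \<and> V g = n)"

end

(*
  Split the field into 0, a set R containing one element of each pair {x, -x} with x \<noteq> 0,
  and -R. Squaring is injective on R and on its complement; it maps the complement onto the
  set S of squares and R onto S - {0}. Put g = 0 off R and g x = h (x^2) on R, where
  y \<mapsto> y + h y maps S - {0} bijectively onto the non-squares using few distinct shifts h y.

  Such an h is built greedily. If r elements of S - {0} are still unmatched, averaging over
  the nonzero shifts d shows that one of them sends at least r^2/(q-1) of these elements to
  unmatched non-squares. Hence the bound r k \<le> q - 1, true for k = 2 at the start, persists
  with k + 1 after each such round; after u - 2 rounds at most (q-1)/u elements remain, and
  these are matched with one shift each. With u = \<lceil>sqrt (q-1)\<rceil> this gives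
  V g \<le> 1 + (u - 2) + (q-1)/u \<le> \<lceil>2 sqrt (q-1)\<rceil> - 1.
*)
theory Submission
  imports Defs
begin

lemma card_Compl:
  fixes A :: "'a::finite set"
  shows "card (- A) = CARD('a) - card A"
  by (simp add: Compl_eq_Diff_UNIV card_Diff_subset)

lemma involution_half_system:
  fixes \<sigma> :: "'a::finite \<Rightarrow> 'a"
  assumes involution: "\<And>x. \<sigma> (\<sigma> x) = x"
  obtains R where "R \<inter> \<sigma> ` R = {}" "R \<union> \<sigma> ` R = {x. \<sigma> x \<noteq> x}"
    "card {x. \<sigma> x \<noteq> x} = 2 * card R"
proof -
  obtain \<nu> :: "'a \<Rightarrow> nat" where "inj \<nu>"
    using finite_imp_inj_to_nat_seg[of "UNIV :: 'a set"] by auto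
  define R where "R = {x. \<nu> (\<sigma> x) < \<nu> x}"
  have image: "\<sigma> ` R = {x. \<nu> x < \<nu> (\<sigma> x)}"
  proof (intro set_eqI iffI)
    fix x
    assume "x \<in> {x. \<nu> x < \<nu> (\<sigma> x)}"
    then show "x \<in> \<sigma> ` R"
      by (intro image_eqI[where x = "\<sigma> x"]) (simp_all add: R_def involution)
  qed (auto simp: R_def involution)
  then have "R \<inter> \<sigma> ` R = {}"
    by (auto simp: R_def)
  moreover have "R \<union> \<sigma> ` R = {x. \<sigma> x \<noteq> x}"
    using image \<open>inj \<nu>\<close> by (auto simp: R_def inj_eq)
  moreover have "inj \<sigma>"
    by (rule injI) (metis involution)
  ultimately show ?thesis
    using card_Un_disjoint[of R "\<sigma> ` R"] card_image[of \<sigma> R] that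
    by (simp add: inj_on_subset)
qed

lemma inj_on_half_system:
  fixes \<sigma> :: "'a \<Rightarrow> 'a"
  assumes involution: "\<And>x. \<sigma> (\<sigma> x) = x"
    and fibres: "\<And>x y. f x = f y \<longleftrightarrow> y = x \<or> y = \<sigma> x"
    and R: "R \<inter> \<sigma> ` R = {}" "R \<union> \<sigma> ` R = {x. \<sigma> x \<noteq> x}"
  shows "inj_on f R" "inj_on f (- R)" "f ` R \<subseteq> f ` (- R)"
proof -
  show "inj_on f R"
  proof (rule inj_onI)
    fix x y
    assume "x \<in> R" "y \<in> R" "f x = f y"
    then show "x = y"
      using fibres[of x y] R(1) by blast
  qed
  show "inj_on f (- R)"
  proof (rule inj_onI)
    fix x y
    assume "x \<in> - R" "y \<in> - R" "f x = f y"
    show "x = y"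
    proof (rule ccontr)
      assume "x \<noteq> y"
      then have "y = \<sigma> x" "\<sigma> x \<noteq> x"
        using fibres[of x y] \<open>f x = f y\<close> by auto
      then have "x \<in> \<sigma> ` R"
        using R(2) \<open>x \<in> - R\<close> by blast
      then have "y \<in> R"
        using \<open>y = \<sigma> x\<close> involution by auto
      then show False
        using \<open>y \<in> - R\<close> by simp
    qed
  qed
  show "f ` R \<subseteq> f ` (- R)"
  proof
    fix z
    assume "z \<in> f ` R"
    then obtain r where "r \<in> R" "z = f r"
      by blast
    then have "\<sigma> r \<in> - R"
      using R(1) by blast
    moreover have "f (\<sigma> r) = z"
      using fibres[of r "\<sigma> r"] \<open>z = f r\<close> by simp
    ultimately show "z \<in> f ` (- R)"
      by blast
  qed
qed

lemma two_neq_zero_if_odd_card: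
  assumes "odd CARD('a::{finite, ring_1})"
  shows "(2::'a) \<noteq> 0"
proof
  assume "(2::'a) = 0"
  then have "x + 1 + 1 = x" for x :: 'a
    by (simp add: add.assoc flip: one_add_one)
  then obtain R :: "'a set" where "R \<inter> (\<lambda>x. x + 1) ` R = {}"
      "R \<union> (\<lambda>x. x + 1) ` R = {x. x + 1 \<noteq> x}" "card {x::'a. x + 1 \<noteq> x} = 2 * card R"
    by (rule involution_half_system)
  then have "even CARD('a)"
    by simp
  with assms show False
    by simp
qed

lemma mult_Suc_mult_diff_le_square:
  fixes r k N :: nat
  assumes "r * k \<le> N" "1 \<le> k"
  shows "r * (k + 1) * (N - r) \<le> N * N"
proof (cases "r \<le> N")
  case True
  obtain e where N: "N = r * k + e"
    using assms(1) le_Suc_ex by blast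
  have "int (r * (k + 1) * (N - r)) = int r * (int k + 1) * (int N - int r)"
    by (simp only: of_nat_mult of_nat_add of_nat_diff[OF True] of_nat_1)
  then have "int (N * N) - int (r * (k + 1) * (N - r))
      = int r * int r + int r * int e * (int k - 1) + int e * int e"
    unfolding N by (simp add: algebra_simps)
  moreover have "0 \<le> int r * int e * (int k - 1)"
    using assms(2) by simp
  ultimately show ?thesis
    by (smt (verit) zero_le_square of_nat_le_iff)
qed simp

lemma greedy_step_bound:
  fixes r m k N :: nat
  assumes "r * r \<le> N * m" "r * k \<le> N" "1 \<le> k"
  shows "(r - m) * (k + 1) \<le> N"
proof (cases "N = 0")
  case False
  have "N * (r - m) \<le> r * (N - r)"
    using assms(1) by (simp add: diff_mult_distrib2 mult.commute)
  then have "N * ((r - m) * (k + 1)) \<le> r * (k + 1) * (N - r)"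
    by (metis mult.assoc mult.commute mult_le_mono1)
  also have "\<dots> \<le> N * N"
    using assms(2,3) by (rule mult_Suc_mult_diff_le_square)
  finally show ?thesis
    using False by simp
qed (use assms(1) in simp)

lemma ceiling_sqrt_add_div_le:
  fixes N :: nat
  assumes "0 < N"
  shows "nat \<lceil>sqrt N\<rceil> + N div nat \<lceil>sqrt N\<rceil> \<le> nat \<lceil>2 * sqrt N\<rceil>"
proof -
  define s where "s = sqrt N"
  define u where "u = nat \<lceil>s\<rceil>"
  define c where "c = nat \<lceil>2 * s\<rceil>"
  have "1 \<le> s" "s * s = N"
    using assms by (simp_all add: s_def)
  have u: "s \<le> u" "u < s + 1"
    unfolding u_def using \<open>1 \<le> s\<close> by linarith+
  have c: "2 * s \<le> c"
    unfolding c_def by linarith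
  have "u \<le> c"
    using u c \<open>1 \<le> s\<close> by linarith
  have "real N < u * (c - real u + 1)"
  proof -
    define e where "e = u - s"
    have "0 \<le> e" "e < 1"
      using u by (auto simp: e_def)
    then have "e * e \<le> e"
      by (intro mult_right_le_one_le) auto
    have "u * (2 * s - u + 1) = s * s + s + e - e * e"
      by (simp add: e_def algebra_simps)
    moreover have "u * (2 * s - u + 1) \<le> u * (c - real u + 1)"
      using c by (intro mult_left_mono) auto
    ultimately show ?thesis
      using \<open>s * s = N\<close> \<open>1 \<le> s\<close> \<open>e * e \<le> e\<close> by linarith
  qed
  also have "\<dots> = real (u * (c - u + 1))"
    by (simp only: of_nat_mult of_nat_add of_nat_diff[OF \<open>u \<le> c\<close>] of_nat_1)
  finally have "N < u * (c - u + 1)"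
    by (simp only: of_nat_less_iff)
  then have "N div u < c - u + 1"
    using u \<open>1 \<le> s\<close> by (simp add: div_less_iff_less_mult mult.commute)
  then show ?thesis
    using \<open>u \<le> c\<close> unfolding u_def c_def s_def by linarith
qed

lemma exists_shift_with_many_matches:
  fixes J C :: "'a::{finite, ab_group_add} set"
  assumes "J \<inter> C = {}"
  shows "\<exists>d. card J * card C \<le> (CARD('a) - 1) * card {j\<in>J. j + d \<in> C}"
proof -
  define matches where "matches d = card {j\<in>J. j + d \<in> C}" for d
  have "(\<Sum>d\<in>UNIV. matches d) = (\<Sum>d\<in>UNIV. \<Sum>j\<in>J. of_bool (j + d \<in> C))"
    by (simp add: matches_def Int_def)
  also have "\<dots> = (\<Sum>j\<in>J. \<Sum>d\<in>UNIV. of_bool (j + d \<in> C))"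
    by (rule sum.swap)
  also have "\<dots> = (\<Sum>j\<in>J. card ((+) j -` C))"
    by (simp add: vimage_def)
  also have "\<dots> = card J * card C"
    by (simp add: card_vimage_inj)
  finally have total: "(\<Sum>d\<in>UNIV. matches d) = card J * card C" .
  have "matches 0 = 0"
    using assms by (auto simp: matches_def)
  then have nonzero_total: "(\<Sum>d\<in>-{0}. matches d) = card J * card C"
    using total sum.remove[of UNIV 0 matches] by (simp add: Compl_eq_Diff_UNIV)
  have "Max (range matches) \<in> range matches"
    by (rule Max_in) auto
  then obtain d where d: "matches d = Max (range matches)"
    by (metis imageE)
  have "(\<Sum>d'\<in>-{0}. matches d') \<le> card (-{0::'a}) * matches d"
    using sum_bounded_above[of "-{0}" matches "matches d"] d by simp
  also have "card (-{0::'a}) = CARD('a) - 1"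
    by (simp add: Compl_eq_Diff_UNIV card_Diff_singleton)
  finally show ?thesis
    using nonzero_total by (auto simp: matches_def)
qed

lemma bij_betw_shift_extend:
  fixes d :: "'a::ab_group_add"
  assumes "bij_betw (\<lambda>j. j + h j) (J - M) (C - (\<lambda>j. j + d) ` M)"
    and "M \<subseteq> J" "(\<lambda>j. j + d) ` M \<subseteq> C"
  shows "bij_betw (\<lambda>j. j + (if j \<in> M then d else h j)) J C"
proof -
  have "bij_betw (\<lambda>j. j + (if j \<in> M then d else h j)) M ((\<lambda>j. j + d) ` M)"
    by (auto simp: bij_betw_def inj_on_def)
  moreover have "bij_betw (\<lambda>j. j + (if j \<in> M then d else h j)) (J - M) (C - (\<lambda>j. j + d) ` M)"
    using assms(1) by (rule bij_betw_cong[THEN iffD1, rotated]) auto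
  ultimately have "bij_betw (\<lambda>j. j + (if j \<in> M then d else h j))
      (M \<union> (J - M)) ((\<lambda>j. j + d) ` M \<union> (C - (\<lambda>j. j + d) ` M))"
    by (rule bij_betw_combine) blast
  moreover have "M \<union> (J - M) = J" "(\<lambda>j. j + d) ` M \<union> (C - (\<lambda>j. j + d) ` M) = C"
    using assms(2,3) by auto
  ultimately show ?thesis
    by simp
qed

lemma exists_shift_matching:
  fixes J C :: "'a::{finite, ab_group_add} set"
  assumes "J \<inter> C = {}" "card J = card C" "card J * k \<le> CARD('a) - 1" "1 \<le> k" "k \<le> u"
  shows "\<exists>h. bij_betw (\<lambda>j. j + h j) J C \<and> card (h ` J) + k \<le> u + (CARD('a) - 1) div u"
  using assms
proof (induction "u - k" arbitrary: k J C)
  case 0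
  then have "k = u"
    by simp
  obtain \<phi> where \<phi>: "bij_betw \<phi> J C"
    using finite_same_card_bij[OF finite finite \<open>card J = card C\<close>] by blast
  have "card ((\<lambda>j. \<phi> j - j) ` J) \<le> card J"
    by (rule card_image_le) simp
  also have "card J \<le> (CARD('a) - 1) div u"
    using 0 \<open>k = u\<close> by (simp add: less_eq_div_iff_mult_less_eq)
  finally show ?case
    using \<phi> \<open>k = u\<close> by (intro exI[of _ "\<lambda>j. \<phi> j - j"]) simp
next
  case (Suc i)
  let ?N = "CARD('a) - 1"
  show ?case
  proof (cases "J = {}")
    case True
    then show ?thesis
      using Suc.prems by (intro exI[of _ id]) (simp add: bij_betw_def)
  next
    case False
    obtain d where d: "card J * card C \<le> ?N * card {j\<in>J. j + d \<in> C}"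
      using exists_shift_with_many_matches[OF Suc.prems(1)] by blast
    define M where "M = {j\<in>J. j + d \<in> C}"
    have M: "M \<subseteq> J" "(\<lambda>j. j + d) ` M \<subseteq> C"
      by (auto simp: M_def)
    have "card (J - M) = card J - card M"
      using M by (simp add: card_Diff_subset)
    moreover have "card (C - (\<lambda>j. j + d) ` M) = card J - card M"
      using M Suc.prems(2) by (simp add: card_Diff_subset card_image)
    moreover have "(card J - card M) * (k + 1) \<le> ?N"
      using d Suc.prems(2-4) by (intro greedy_step_bound) (simp_all add: M_def)
    ultimately have card_rest: "card (J - M) = card (C - (\<lambda>j. j + d) ` M)"
      and bound_rest: "card (J - M) * (k + 1) \<le> ?N"
      by simp_all
    have disj_rest: "(J - M) \<inter> (C - (\<lambda>j. j + d) ` M) = {}"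
      using Suc.prems(1) by blast
    have "i = u - (k + 1)" "k + 1 \<le> u"
      using Suc.hyps(2) by arith+
    from Suc.hyps(1)[OF this(1) disj_rest card_rest bound_rest _ this(2)]
    obtain h where h: "bij_betw (\<lambda>j. j + h j) (J - M) (C - (\<lambda>j. j + d) ` M)"
        "card (h ` (J - M)) + (k + 1) \<le> u + ?N div u"
      by auto
    let ?h = "\<lambda>j. if j \<in> M then d else h j"
    have "card (?h ` J) \<le> card (insert d (h ` (J - M)))"
      by (rule card_mono) auto
    also have "\<dots> \<le> Suc (card (h ` (J - M)))"
      by (rule card_insert_le_m1) auto
    finally show ?thesis
      using bij_betw_shift_extend[OF h(1) M] h(2) by (intro exI[of _ ?h]) simp
  qed
qed

lemma pres_le_Suc_card_shifts:
  fixes f h :: "'a::{finite, ab_group_add} \<Rightarrow> 'a"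
  assumes "inj_on f R" "inj_on f (- R)"
    and "bij_betw (\<lambda>y. y + h y) (f ` R) (- f ` (- R))"
  shows "pres f \<le> Suc (card (h ` f ` R))"
proof -
  define g where "g x = (if x \<in> R then h (f x) else 0)" for x
  have "bij_betw (\<lambda>x. g x + f x) R (- f ` (- R))"
    using bij_betw_trans[OF inj_on_imp_bij_betw[OF assms(1)] assms(3)]
    by (rule bij_betw_cong[THEN iffD1, rotated]) (simp add: g_def add.commute)
  moreover have "bij_betw (\<lambda>x. g x + f x) (- R) (f ` (- R))"
    using inj_on_imp_bij_betw[OF assms(2)]
    by (rule bij_betw_cong[THEN iffD1, rotated]) (simp add: g_def)
  ultimately have "bij_betw (\<lambda>x. g x + f x) (R \<union> - R) (- f ` (- R) \<union> f ` (- R))"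
    by (rule bij_betw_combine) blast
  then have "bij (\<lambda>x. g x + f x)"
    by (simp add: Un_commute)
  then have "pres f \<le> V g"
    unfolding pres_def by (intro Least_le) blast
  also have "V g \<le> card (insert 0 (h ` f ` R))"
    unfolding V_def by (rule card_mono) (auto simp: g_def)
  also have "\<dots> \<le> Suc (card (h ` f ` R))"
    by (rule card_insert_le_m1) auto
  finally show ?thesis .
qed

lemma pres_le_of_inj_on_complements:
  fixes f :: "'a::{finite, ab_group_add} \<Rightarrow> 'a"
  assumes "inj_on f R" "inj_on f (- R)" "f ` R \<subseteq> f ` (- R)"
    and "card R * k \<le> CARD('a) - 1" "1 \<le> k" "k \<le> u"
  shows "pres f + k \<le> Suc (u + (CARD('a) - 1) div u)"
proof -
  have "card (f ` R) = card (- f ` (- R))"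
    using assms(1,2) card_mono[of UNIV R] by (simp add: card_image card_Compl)
  moreover have "f ` R \<inter> - f ` (- R) = {}"
    using assms(3) by blast
  moreover have "card (f ` R) * k \<le> CARD('a) - 1"
    using assms(1,4) by (simp add: card_image)
  ultimately obtain h where h: "bij_betw (\<lambda>y. y + h y) (f ` R) (- f ` (- R))"
      "card (h ` f ` R) + k \<le> u + (CARD('a) - 1) div u"
    using exists_shift_matching assms(5,6) by blast
  have "pres f \<le> Suc (card (h ` f ` R))"
    using assms(1,2) h(1) by (rule pres_le_Suc_card_shifts)
  with h(2) show ?thesis
    by linarith
qed

theorem corollary5p1:
  fixes f :: "'a::{field, finite} \<Rightarrow> 'a"
  assumes "odd CARD('a)"
    and "\<And>x. f x = x ^ 2"
  shows "pres f \<le> nat (\<lceil>2 * sqrt (real (CARD('a) - 1))\<rceil>) - 1"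
proof -
  define N where "N = CARD('a) - 1"
  have "(2::'a) \<noteq> 0"
    using assms(1) by (rule two_neq_zero_if_odd_card)
  then have non_fixed: "{x::'a. - x \<noteq> x} = - {0}"
    by (auto simp: neg_eq_iff_add_eq_0 simp flip: mult_2)
  obtain R :: "'a set" where R: "R \<inter> uminus ` R = {}" "R \<union> uminus ` R = {x. - x \<noteq> x}"
      and card_R: "card {x::'a. - x \<noteq> x} = 2 * card R"
    using minus_minus by (rule involution_half_system)
  have "f x = f y \<longleftrightarrow> y = x \<or> y = - x" for x y
    by (auto simp: assms(2) power2_eq_iff)
  note halves = inj_on_half_system[of uminus, OF minus_minus this R]
  have card_half: "N = 2 * card R"
    using card_R non_fixed by (simp add: N_def card_Compl)
  have "(1::'a) \<in> R \<union> uminus ` R"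
    using R(2) non_fixed by simp
  then have "R \<noteq> {}"
    by blast
  with card_half have "2 \<le> N"
    by (simp add: card_gt_0_iff Suc_le_eq)
  then have "1 < sqrt N"
    by simp
  then have sqrt_N: "2 \<le> nat \<lceil>sqrt N\<rceil>"
    by linarith
  have "pres f + 2 \<le> Suc (nat \<lceil>sqrt N\<rceil> + N div nat \<lceil>sqrt N\<rceil>)"
    by (rule pres_le_of_inj_on_complements[OF halves, folded N_def])
      (use card_half sqrt_N in simp_all)
  also have "\<dots> \<le> Suc (nat \<lceil>2 * sqrt N\<rceil>)"
    using \<open>2 \<le> N\<close> ceiling_sqrt_add_div_le[of N] by simp
  finally show ?thesis
    unfolding N_def by simp
qed

end
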